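(* Let $A$ be a noetherian integral domain which is a $\mathbb{C}$-algebra, and let $a\in A$ be an irreducible element. If $A/aA$ is rigid, then the only locally nilpotent derivation $D$ of $A$ satisfying $D(a)=0$ is the zero derivation.
   Context: A locally nilpotent derivation (LND) of a $\mathbb{C}$-algebra is a $\mathbb{C}$-linear derivation $D$ such that every element is killed by some power of $D$. A ring is rigid if its only LND is zero. *)

theory Defs
  imports Complex_Main "HOL-Algebra.Algebra"
begin

definition C_ring :: "complex ring" where
  "C_ring = \<lparr>carrier = UNIV, monoid.mult = (*), one = 1, ring.zero = 0, ring.add = (+)\<rparr>"

definition C_algebra :: "('a, 'b) ring_scheme \<Rightarrow> (complex \<Rightarrow> 'a) \<Rightarrow> bool" where
  "C_algebra R phi \<longleftrightarrow> cring R \<and> phi \<in> ring_hom C_ring R"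

definition C_derivation :: "('a, 'b) ring_scheme \<Rightarrow> (complex \<Rightarrow> 'a) \<Rightarrow> ('a \<Rightarrow> 'a) \<Rightarrow> bool" where
  "C_derivation R phi D \<longleftrightarrow>
     D \<in> carrier R \<rightarrow> carrier R \<and>
     (\<forall>x\<in>carrier R. \<forall>y\<in>carrier R. D (x \<oplus>\<^bsub>R\<^esub> y) = D x \<oplus>\<^bsub>R\<^esub> D y) \<and>
     (\<forall>c. \<forall>x\<in>carrier R. D (phi c \<otimes>\<^bsub>R\<^esub> x) = phi c \<otimes>\<^bsub>R\<^esub> D x) \<and>
     (\<forall>x\<in>carrier R. \<forall>y\<in>carrier R.
        D (x \<otimes>\<^bsub>R\<^esub> y) = (x \<otimes>\<^bsub>R\<^esub> D y) \<oplus>\<^bsub>R\<^esub> (D x \<otimes>\<^bsub>R\<^esub> y))"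

definition locally_nilpotent :: "('a, 'b) ring_scheme \<Rightarrow> ('a \<Rightarrow> 'a) \<Rightarrow> bool" where
  "locally_nilpotent R D \<longleftrightarrow> (\<forall>x\<in>carrier R. \<exists>n. (D ^^ n) x = \<zero>\<^bsub>R\<^esub>)"

definition LND :: "('a, 'b) ring_scheme \<Rightarrow> (complex \<Rightarrow> 'a) \<Rightarrow> ('a \<Rightarrow> 'a) \<Rightarrow> bool" where
  "LND R phi D \<longleftrightarrow> C_derivation R phi D \<and> locally_nilpotent R D"

definition zero_derivation :: "('a, 'b) ring_scheme \<Rightarrow> ('a \<Rightarrow> 'a) \<Rightarrow> bool" where
  "zero_derivation R D \<longleftrightarrow> (\<forall>x\<in>carrier R. D x = \<zero>\<^bsub>R\<^esub>)"

definition rigid :: "('a, 'b) ring_scheme \<Rightarrow> (complex \<Rightarrow> 'a) \<Rightarrow> bool" where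
  "rigid R phi \<longleftrightarrow> (\<forall>D. LND R phi D \<longrightarrow> zero_derivation R D)"

definition quot_map :: "('a, 'b) ring_scheme \<Rightarrow> (complex \<Rightarrow> 'a) \<Rightarrow> 'a \<Rightarrow> complex \<Rightarrow> 'a set" where
  "quot_map R phi a = (\<lambda>c. (PIdl\<^bsub>R\<^esub> a) +>\<^bsub>R\<^esub> phi c)"

end

theory Submission
  imports Defs
begin

(* Since D(a) = 0, D maps the ideal aA
   into itself, so it induces a locally nilpotent derivation of A/aA; rigidity forces this
   induced derivation to vanish, i.e. D(A) \<subseteq> aA.  As A is a domain we may divide:
   D = a D' for a unique map D', and D' is again a locally nilpotent derivation with
   D'(a) = 0.  Iterating, D = a^n D_n for all n.  If D(x) \<noteq> 0, the principal ideals
   (D_0 x) \<subseteq> (D_1 x) \<subseteq> ... form an ascending chain which must stabilise because A is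
   noetherian; stabilisation forces a to be a unit, a contradiction. *)

lemma derivation_closed:
  assumes "C_derivation R phi D" and "x \<in> carrier R"
  shows "D x \<in> carrier R"
  using assms unfolding C_derivation_def by auto

lemma derivation_scalar:
  assumes "C_derivation R phi D" and "x \<in> carrier R"
  shows "D (phi c \<otimes>\<^bsub>R\<^esub> x) = phi c \<otimes>\<^bsub>R\<^esub> D x"
  using assms unfolding C_derivation_def by auto

lemma C_derivation_laws:
  assumes "C_derivation R phi D" and "x \<in> carrier R" and "y \<in> carrier R"
  shows derivation_add: "D (x \<oplus>\<^bsub>R\<^esub> y) = D x \<oplus>\<^bsub>R\<^esub> D y"
    and derivation_mult: "D (x \<otimes>\<^bsub>R\<^esub> y) = (x \<otimes>\<^bsub>R\<^esub> D y) \<oplus>\<^bsub>R\<^esub> (D x \<otimes>\<^bsub>R\<^esub> y)"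
  using assms unfolding C_derivation_def by auto

lemma (in ring) derivation_mult_constant:
  assumes "C_derivation R phi D" "D a = \<zero>" "a \<in> carrier R" "y \<in> carrier R"
  shows "D (y \<otimes> a) = D y \<otimes> a"
  using assms derivation_mult[OF assms(1,4,3)] derivation_closed[OF assms(1)] by simp

lemma (in ring) iterated_derivation_mult_constant:
  assumes "C_derivation R phi D" "D a = \<zero>" "a \<in> carrier R" "y \<in> carrier R"
  shows "(D ^^ k) (y \<otimes> a) = (D ^^ k) y \<otimes> a \<and> (D ^^ k) y \<in> carrier R"
proof (induction k)
  case 0
  then show ?case using assms(4) by simp
next
  case (Suc k)
  then show ?case
    using derivation_mult_constant[OF assms(1-3)] derivation_closed[OF assms(1)] by simp
qed

lemma (in cring) derivation_PIdl_stable: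
  assumes "C_derivation R phi D" "D a = \<zero>" "a \<in> carrier R"
  shows "D ` (PIdl a) \<subseteq> PIdl a"
proof
  fix z assume "z \<in> D ` (PIdl a)"
  then obtain y where y: "y \<in> carrier R" "z = D (y \<otimes> a)" unfolding cgenideal_def by blast
  then have "z = D y \<otimes> a" using derivation_mult_constant[OF assms] by simp
  then show "z \<in> PIdl a" unfolding cgenideal_def using derivation_closed[OF assms(1) y(1)] by blast
qed

text \<open>The derivation induced on R/I by a derivation D with D(I) \<subseteq> I: it sends the coset
  I + x to I + D x.\<close>

definition quotient_derivation :: "('a, 'b) ring_scheme \<Rightarrow> 'a set \<Rightarrow> ('a \<Rightarrow> 'a) \<Rightarrow> 'a set \<Rightarrow> 'a set" where
  "quotient_derivation R I D = (\<lambda>S. \<Union>x\<in>S. I +>\<^bsub>R\<^esub> D x)"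

lemma (in ideal) quotient_derivation_rcos:
  assumes D: "C_derivation R phi D" and stable: "D ` I \<subseteq> I" and x: "x \<in> carrier R"
  shows "quotient_derivation R I D (I +> x) = I +> D x"
proof -
  have "I +> D x' = I +> D x" if x': "x' \<in> I +> x" for x'
  proof -
    obtain h where h: "h \<in> I" "x' = h \<oplus> x" using x' unfolding a_r_coset_def' by auto
    have "D x' = D h \<oplus> D x" using h derivation_add[OF D Icarr x] by simp
    also have "\<dots> \<in> I +> D x"
      using stable h(1) a_rcosI[OF _ a_subset derivation_closed[OF D x]] by blast
    finally show ?thesis
      by (rule a_repr_independence[symmetric, OF _ derivation_closed[OF D x] a_subgroup])
  qed
  then show ?thesis using a_rcos_self[OF x] unfolding quotient_derivation_def by blast
qed

lemma (in ideal) quotient_derivation_LND: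
  assumes D: "LND R phi D" and stable: "D ` I \<subseteq> I" and phi: "\<And>c. phi c \<in> carrier R"
  shows "LND (R Quot I) (\<lambda>c. I +> phi c) (quotient_derivation R I D)"
proof -
  let ?Q = "R Quot I" and ?F = "quotient_derivation R I D"
  have der: "C_derivation R phi D" and nil: "locally_nilpotent R D"
    using D unfolding LND_def by auto
  have F: "?F (I +> x) = I +> D x" if "x \<in> carrier R" for x
    using quotient_derivation_rcos[OF der stable that] .
  have carrier_Q: "carrier ?Q = (\<lambda>x. I +> x) ` carrier R"
    unfolding FactRing_def A_RCOSETS_def' by auto
  have add_Q: "(I +> x) \<oplus>\<^bsub>?Q\<^esub> (I +> y) = I +> (x \<oplus> y)"
    and mult_Q: "(I +> x) \<otimes>\<^bsub>?Q\<^esub> (I +> y) = I +> (x \<otimes> y)"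
    if "x \<in> carrier R" "y \<in> carrier R" for x y
    using ring_hom_add[OF rcos_ring_hom that] ring_hom_mult[OF rcos_ring_hom that] by simp_all
  have iter: "(?F ^^ n) (I +> x) = I +> (D ^^ n) x \<and> (D ^^ n) x \<in> carrier R"
    if "x \<in> carrier R" for n x
    by (induction n) (auto simp: that F derivation_closed[OF der])
  show ?thesis
    unfolding LND_def C_derivation_def locally_nilpotent_def
  proof (intro conjI ballI allI)
    show "?F \<in> carrier ?Q \<rightarrow> carrier ?Q"
      unfolding carrier_Q using F derivation_closed[OF der] by auto
  next
    fix S T assume "S \<in> carrier ?Q" "T \<in> carrier ?Q"
    then obtain x y where xy: "x \<in> carrier R" "y \<in> carrier R" "S = I +> x" "T = I +> y"
      unfolding carrier_Q by auto
    show "?F (S \<oplus>\<^bsub>?Q\<^esub> T) = ?F S \<oplus>\<^bsub>?Q\<^esub> ?F T"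
      using xy by (simp add: add_Q F derivation_add[OF der] derivation_closed[OF der])
    show "?F (S \<otimes>\<^bsub>?Q\<^esub> T) = S \<otimes>\<^bsub>?Q\<^esub> ?F T \<oplus>\<^bsub>?Q\<^esub> ?F S \<otimes>\<^bsub>?Q\<^esub> T"
      using xy by (simp add: add_Q mult_Q F derivation_mult[OF der] derivation_closed[OF der])
  next
    fix c S assume "S \<in> carrier ?Q"
    then obtain x where x: "x \<in> carrier R" "S = I +> x" unfolding carrier_Q by auto
    show "?F ((I +> phi c) \<otimes>\<^bsub>?Q\<^esub> S) = (I +> phi c) \<otimes>\<^bsub>?Q\<^esub> ?F S"
      using x phi by (simp add: mult_Q F derivation_scalar[OF der] derivation_closed[OF der])
  next
    fix S assume "S \<in> carrier ?Q"
    then obtain x where x: "x \<in> carrier R" "S = I +> x" unfolding carrier_Q by auto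
    obtain n where "(D ^^ n) x = \<zero>" using nil x(1) unfolding locally_nilpotent_def by blast
    then have "(?F ^^ n) S = \<zero>\<^bsub>?Q\<^esub>"
      using iter[OF x(1)] x(2) a_rcos_const[OF additive_subgroup.zero_closed[OF is_additive_subgroup]]
      unfolding FactRing_def by simp
    then show "\<exists>n. (?F ^^ n) S = \<zero>\<^bsub>?Q\<^esub>" by blast
  qed
qed

lemma (in ideal) rigid_quotient_derivation_into_ideal:
  assumes rigid: "rigid (R Quot I) (\<lambda>c. I +> phi c)"
    and D: "LND R phi D" and stable: "D ` I \<subseteq> I" and phi: "\<And>c. phi c \<in> carrier R"
    and x: "x \<in> carrier R"
  shows "D x \<in> I"
proof -
  have der: "C_derivation R phi D" using D unfolding LND_def by blast
  have "zero_derivation (R Quot I) (quotient_derivation R I D)"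
    using rigid quotient_derivation_LND[OF D stable phi] unfolding rigid_def by blast
  moreover have "I +> x \<in> carrier (R Quot I)"
    unfolding FactRing_def A_RCOSETS_def' using x by auto
  ultimately have "I +> D x = I"
    using quotient_derivation_rcos[OF der stable x] unfolding zero_derivation_def FactRing_def by auto
  then show ?thesis using a_rcos_self[OF derivation_closed[OF der x]] by simp
qed

definition divided_derivation :: "('a, 'b) ring_scheme \<Rightarrow> 'a \<Rightarrow> ('a \<Rightarrow> 'a) \<Rightarrow> 'a \<Rightarrow> 'a" where
  "divided_derivation R a D = (\<lambda>x. THE y. y \<in> carrier R \<and> D x = y \<otimes>\<^bsub>R\<^esub> a)"

text \<open>Since a is cancellable, D/a is determined by D x = (D/a)(x) a.\<close>

lemma (in domain) divided_derivation_eq: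
  assumes "a \<in> carrier R" "a \<noteq> \<zero>" "y \<in> carrier R" "D x = y \<otimes> a"
  shows "divided_derivation R a D x = y"
  unfolding divided_derivation_def
proof (rule the_equality)
  fix z assume "z \<in> carrier R \<and> D x = z \<otimes> a"
  then show "z = y" using assms m_rcancel by metis
qed (use assms in blast)

lemma (in domain) divided_derivation_spec:
  assumes "a \<in> carrier R" "a \<noteq> \<zero>" "x \<in> carrier R" "\<And>z. z \<in> carrier R \<Longrightarrow> D z \<in> PIdl a"
  shows "divided_derivation R a D x \<in> carrier R \<and> D x = divided_derivation R a D x \<otimes> a"
proof -
  obtain y where y: "y \<in> carrier R" "D x = y \<otimes> a"
    using assms(3,4) unfolding cgenideal_def by blast
  then have "divided_derivation R a D x = y" by (rule divided_derivation_eq[OF assms(1,2)])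
  with y show ?thesis by simp
qed

text \<open>D/a is again a locally nilpotent derivation annihilating a.  Each derivation
  identity for D/a is obtained from the one for D by cancelling the nonzero factor a.\<close>

lemma (in domain) divided_derivation_LND:
  assumes a: "a \<in> carrier R" "a \<noteq> \<zero>" and phi: "\<And>c. phi c \<in> carrier R"
    and D: "LND R phi D" and Da: "D a = \<zero>"
    and into: "\<And>x. x \<in> carrier R \<Longrightarrow> D x \<in> PIdl a"
  shows "LND R phi (divided_derivation R a D) \<and> divided_derivation R a D a = \<zero>"
proof -
  let ?E = "divided_derivation R a D"
  have der: "C_derivation R phi D" and nil: "locally_nilpotent R D"
    using D unfolding LND_def by auto
  have E_closed: "?E x \<in> carrier R" and E_mult: "?E x \<otimes> a = D x" if "x \<in> carrier R" for x
    using divided_derivation_spec[where D = D, OF a that into] by auto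
  have cancel: "u = v" if "u \<in> carrier R" "v \<in> carrier R" "u \<otimes> a = v \<otimes> a" for u v
    using m_rcancel[OF a(2,1) that(1,2)] that(3) by simp
  have E_nil: "(D ^^ k) x = \<zero> \<Longrightarrow> (?E ^^ k) x = \<zero>" if "x \<in> carrier R" for k x
    using that
  proof (induction k arbitrary: x)
    case (Suc k)
    note iter = iterated_derivation_mult_constant[OF der Da a(1) E_closed[OF Suc.prems(2)], of k]
    have "(D ^^ Suc k) x = (D ^^ k) (?E x \<otimes> a)"
      using E_mult[OF Suc.prems(2)] by (simp add: funpow_Suc_right del: funpow.simps)
    then have "(D ^^ k) (?E x) \<otimes> a = \<zero>" using Suc.prems(1) iter by simp
    then have "(D ^^ k) (?E x) = \<zero>" using integral_iff a iter by blast
    then show ?case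
      using Suc.IH[OF _ E_closed[OF Suc.prems(2)]] by (simp add: funpow_Suc_right del: funpow.simps)
  qed simp
  have "LND R phi ?E"
    unfolding LND_def C_derivation_def locally_nilpotent_def
  proof (intro conjI ballI allI)
    show "?E \<in> carrier R \<rightarrow> carrier R" using E_closed by blast
  next
    fix x y assume x: "x \<in> carrier R" and y: "y \<in> carrier R"
    note closed = E_closed[OF x] E_closed[OF y]
    show "?E (x \<oplus> y) = ?E x \<oplus> ?E y"
    proof (rule cancel)
      show "?E (x \<oplus> y) \<otimes> a = (?E x \<oplus> ?E y) \<otimes> a"
        using x y a closed by (simp add: l_distr E_mult derivation_add[OF der])
    qed (use x y E_closed in auto)
    show "?E (x \<otimes> y) = x \<otimes> ?E y \<oplus> ?E x \<otimes> y"
    proof (rule cancel)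
      have "?E (x \<otimes> y) \<otimes> a = x \<otimes> (?E y \<otimes> a) \<oplus> (?E x \<otimes> a) \<otimes> y"
        using x y by (simp add: E_mult derivation_mult[OF der])
      also have "\<dots> = (x \<otimes> ?E y \<oplus> ?E x \<otimes> y) \<otimes> a"
        using x y a closed by (simp add: l_distr r_distr m_ac)
      finally show "?E (x \<otimes> y) \<otimes> a = (x \<otimes> ?E y \<oplus> ?E x \<otimes> y) \<otimes> a" .
    qed (use x y E_closed in auto)
  next
    fix c x assume x: "x \<in> carrier R"
    show "?E (phi c \<otimes> x) = phi c \<otimes> ?E x"
    proof (rule cancel)
      show "?E (phi c \<otimes> x) \<otimes> a = (phi c \<otimes> ?E x) \<otimes> a"
        using x a phi[of c] E_closed[OF x] by (simp add: m_assoc E_mult derivation_scalar[OF der])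
    qed (use x phi E_closed in auto)
  next
    fix x assume "x \<in> carrier R"
    then show "\<exists>n. (?E ^^ n) x = \<zero>" using nil E_nil unfolding locally_nilpotent_def by blast
  qed
  moreover have "?E a = \<zero>" using divided_derivation_eq[OF a zero_closed] Da a by simp
  ultimately show ?thesis by blast
qed

lemma (in domain) rigid_quotient_divide_derivation:
  assumes a: "a \<in> carrier R" "a \<noteq> \<zero>" and phi: "\<And>c. phi c \<in> carrier R"
    and rigid: "rigid (R Quot (PIdl a)) (quot_map R phi a)"
    and D: "LND R phi D" and Da: "D a = \<zero>"
  shows "LND R phi (divided_derivation R a D) \<and> divided_derivation R a D a = \<zero>"
    and "x \<in> carrier R \<Longrightarrow> divided_derivation R a D x \<in> carrier R \<and>
           D x = divided_derivation R a D x \<otimes> a"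
proof -
  interpret I: ideal "PIdl a" R by (rule cgenideal_ideal[OF a(1)])
  have der: "C_derivation R phi D" using D unfolding LND_def by blast
  have into: "D x \<in> PIdl a" if "x \<in> carrier R" for x
    using I.rigid_quotient_derivation_into_ideal[OF rigid[unfolded quot_map_def] D
        derivation_PIdl_stable[OF der Da a(1)] phi that] .
  show "LND R phi (divided_derivation R a D) \<and> divided_derivation R a D a = \<zero>"
    using divided_derivation_LND[OF a phi D Da into] .
  show "x \<in> carrier R \<Longrightarrow> divided_derivation R a D x \<in> carrier R \<and>
           D x = divided_derivation R a D x \<otimes> a"
    by (rule divided_derivation_spec[where D = D, OF a _ into])
qed

lemma (in noetherian_ring) ascending_ideal_chain_stabilises:
  assumes "\<And>n. ideal (I n) R" and "\<And>n. I n \<subseteq> I (Suc n)"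
  shows "\<exists>N. I (Suc N) \<subseteq> I N"
proof -
  have mono: "I m \<subseteq> I n" if "m \<le> n" for m n
    using lift_Suc_mono_le[of I, OF assms(2) that] .
  have "subset.chain {J. ideal J R} (range I)"
    unfolding pred_on.chain_def using assms(1) mono nat_le_linear by blast
  then have "\<Union>(range I) \<in> range I" by (intro ideal_chain_is_trivial) auto
  then obtain N where "\<Union>(range I) = I N" by blast
  then show ?thesis by blast
qed

lemma (in noetherian_domain) infinitely_divisible_is_zero:
  assumes a: "a \<in> carrier R" "a \<notin> Units R"
    and b: "\<And>n. b n \<in> carrier R" and div: "\<And>n. b n = b (Suc n) \<otimes> a"
  shows "b 0 = \<zero>"
proof (rule ccontr)
  assume "b 0 \<noteq> \<zero>"
  then have nonzero: "b n \<noteq> \<zero>" for n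
  proof (induction n)
    case (Suc n)
    then show ?case using div[of n] a b[of "Suc n"] by auto
  qed
  have "PIdl b n \<subseteq> PIdl b (Suc n)" for n
  proof -
    have "b (Suc n) divides b n" unfolding factor_def using div[of n] a by blast
    then show ?thesis using to_contain_is_to_divide[OF b b] by blast
  qed
  then obtain N where "PIdl b (Suc N) \<subseteq> PIdl b N"
    using ascending_ideal_chain_stabilises[of "\<lambda>n. PIdl b n"] cgenideal_ideal b by blast
  then obtain c where c: "c \<in> carrier R" "b (Suc N) = b N \<otimes> c"
    using to_contain_is_to_divide[OF b b] unfolding factor_def by blast
  have "\<one> \<otimes> b (Suc N) = (b (Suc N) \<otimes> a) \<otimes> c"
    using c(2)[unfolded div[of N]] b by simp
  also have "\<dots> = (a \<otimes> c) \<otimes> b (Suc N)"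
    using a c b by (simp add: m_ac)
  finally have "\<one> \<otimes> b (Suc N) = (a \<otimes> c) \<otimes> b (Suc N)" .
  then have "\<one> = a \<otimes> c"
    using m_rcancel[OF nonzero b one_closed m_closed[OF a(1) c(1)]] by blast
  then have "a \<in> Units R" unfolding Units_def using a c m_comm by force
  with a show False by blast
qed

text \<open>The theorem for an arbitrary nonzero non-unit a.  The iterates D_n of division by a
  satisfy D_n = a D_(n+1); evaluating at a point x gives an infinitely divisible element.\<close>

lemma (in noetherian_domain) rigid_quotient_LND_kernel:
  assumes a: "a \<in> carrier R" "a \<noteq> \<zero>" "a \<notin> Units R" and phi: "\<And>c. phi c \<in> carrier R"
    and rigid: "rigid (R Quot (PIdl a)) (quot_map R phi a)"
    and D: "LND R phi D" and Da: "D a = \<zero>"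
  shows "zero_derivation R D"
  unfolding zero_derivation_def
proof
  fix x assume x: "x \<in> carrier R"
  define Ds where "Ds n = (divided_derivation R a ^^ n) D" for n
  have Ds_Suc_eq: "Ds (Suc n) = divided_derivation R a (Ds n)" for n
    by (simp add: Ds_def)
  have Ds_LND: "LND R phi (Ds n) \<and> Ds n a = \<zero>" for n
  proof (induction n)
    case 0
    show ?case using D Da by (simp add: Ds_def)
  next
    case (Suc n)
    then show ?case
      unfolding Ds_Suc_eq using rigid_quotient_divide_derivation(1)[OF a(1,2) phi rigid] by blast
  qed
  have Ds_Suc: "Ds (Suc n) y \<in> carrier R \<and> Ds n y = Ds (Suc n) y \<otimes> a"
    if y: "y \<in> carrier R" for n y
    unfolding Ds_Suc_eq
    using Ds_LND[of n] rigid_quotient_divide_derivation(2)[OF a(1,2) phi rigid _ _ y] by blast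
  have "D x \<in> carrier R" using D x unfolding LND_def by (blast intro: derivation_closed)
  have "Ds 0 x = \<zero>"
  proof (rule infinitely_divisible_is_zero[OF a(1,3)])
    show "Ds n x \<in> carrier R" for n
    proof (cases n)
      case (Suc m)
      then show ?thesis using Ds_Suc[OF x, of m] by blast
    qed (use \<open>D x \<in> carrier R\<close> in \<open>simp add: Ds_def\<close>)
    show "Ds n x = Ds (Suc n) x \<otimes> a" for n
      using Ds_Suc[OF x, of n] by blast
  qed
  then show "D x = \<zero>" by (simp add: Ds_def)
qed

theorem lemma7p1:
  fixes A :: "('a, 'b) ring_scheme" and phi :: "complex \<Rightarrow> 'a" and a :: 'a
    and D :: "'a \<Rightarrow> 'a"
  assumes "noetherian_domain A"
    and "C_algebra A phi"
    and "a \<in> carrier A"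
    and "ring_irreducible\<^bsub>A\<^esub> a"
    and "rigid (A Quot (PIdl\<^bsub>A\<^esub> a)) (quot_map A phi a)"
    and "LND A phi D"
    and "D a = \<zero>\<^bsub>A\<^esub>"
  shows "zero_derivation A D"
proof -
  have hom: "phi \<in> ring_hom C_ring A" using assms(2) unfolding C_algebra_def by blast
  have phi: "\<And>c. phi c \<in> carrier A" using ring_hom_closed[OF hom] unfolding C_ring_def by simp
  have nonzero: "a \<noteq> \<zero>\<^bsub>A\<^esub>" and nonunit: "a \<notin> Units A"
    using assms(4) unfolding ring_irreducible_def irreducible_def by auto
  show ?thesis
    by (rule noetherian_domain.rigid_quotient_LND_kernel[OF assms(1,3) nonzero nonunit phi assms(5-7)])
qed

end
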